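(* Let $A$ be a commutative subalgebra of a $K$-algebra $E$, let $A'$ be a non-empty subset of $A$, let $\Delta=\{\mathrm{ad}_a\mid a\in A'\}$, let $\mathfrak{a}$ be a nonzero ideal of $N_\Delta(E)$ and $\mathfrak{a}_0=\mathfrak{a}\cap N_\Delta(E)_0=\mathfrak{a}\cap E^\Delta$. Then: (1) $\mathfrak{a}_0$ is a nonzero ideal of the algebra $N_\Delta(E)_0=E^\Delta=C_E(A')$, and $\mathfrak{a}'=N_\Delta(E)\mathfrak{a}_0N_\Delta(E)$ is a nonzero ideal of $N_\Delta(E)$ with $\mathfrak{a}'\cap N_\Delta(E)_0=\mathfrak{a}_0$. (2) If, in addition, $N_\Delta(E)_0$ is commutative, then $[N_\Delta(E)_1,\mathfrak{a}_0]\subseteq\mathfrak{a}_0$.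
   Context: $\mathrm{ad}_a(f)=[a,f]=af-fa$. For $i\geq 1$, $\Delta^i=\{\delta_1\cdots\delta_i\mid\delta_j\in\Delta\}$; $N_\Delta(E)_i=\{e\in E\mid\Delta^{i+1}e=0\}$ for $i\geq0$, $N_\Delta(E)=\bigcup_{i\ge0}N_\Delta(E)_i$, $E^\Delta=\bigcap_{\delta\in\Delta}\ker\delta$. $C_E(A')=\{e\in E\mid ea=ae \text{ for all } a\in A'\}$. *)

theory Defs
  imports Main
begin

text \<open>A (unital, associative) K-algebra E: a ring E together with a ring
homomorphism from the field K into the centre of E (the scalar action is
k \<cdot> e = scal k * e).\<close>
definition K_algebra :: "('k::field \<Rightarrow> 'e::ring_1) \<Rightarrow> bool" where
  "K_algebra scal \<longleftrightarrow>
     (\<forall>x y. scal (x + y) = scal x + scal y) \<and>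
     (\<forall>x y. scal (x * y) = scal x * scal y) \<and>
     scal 1 = 1 \<and>
     (\<forall>k e. scal k * e = e * scal k)"

definition subspace_K :: "('k::field \<Rightarrow> 'e::ring_1) \<Rightarrow> 'e set \<Rightarrow> bool" where
  "subspace_K scal V \<longleftrightarrow> 0 \<in> V \<and> (\<forall>x\<in>V. \<forall>y\<in>V. x + y \<in> V) \<and>
     (\<forall>k. \<forall>x\<in>V. scal k * x \<in> V)"

definition subalgebra :: "('k::field \<Rightarrow> 'e::ring_1) \<Rightarrow> 'e set \<Rightarrow> bool" where
  "subalgebra scal A \<longleftrightarrow> subspace_K scal A \<and> 1 \<in> A \<and> (\<forall>x\<in>A. \<forall>y\<in>A. x * y \<in> A)"

definition commutative_set :: "'e::ring_1 set \<Rightarrow> bool" where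
  "commutative_set S \<longleftrightarrow> (\<forall>x\<in>S. \<forall>y\<in>S. x * y = y * x)"

definition alg_ideal :: "('k::field \<Rightarrow> 'e::ring_1) \<Rightarrow> 'e set \<Rightarrow> 'e set \<Rightarrow> bool" where
  "alg_ideal scal S I \<longleftrightarrow> I \<subseteq> S \<and> subspace_K scal I \<and>
     (\<forall>s\<in>S. \<forall>x\<in>I. s * x \<in> I \<and> x * s \<in> I)"

definition ad :: "'e::ring_1 \<Rightarrow> 'e \<Rightarrow> 'e" where
  "ad a f = a * f - f * a"

definition op_pow :: "('e \<Rightarrow> 'e) set \<Rightarrow> nat \<Rightarrow> ('e \<Rightarrow> 'e) set" where
  "op_pow D i = {foldr (\<circ>) ds id | ds. length ds = i \<and> set ds \<subseteq> D}"

definition N_level :: "('e::ring_1 \<Rightarrow> 'e) set \<Rightarrow> nat \<Rightarrow> 'e set" where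
  "N_level D i = {e. \<forall>\<delta>\<in>op_pow D (Suc i). \<delta> e = 0}"

definition N_all :: "('e::ring_1 \<Rightarrow> 'e) set \<Rightarrow> 'e set" where
  "N_all D = (\<Union>i. N_level D i)"

definition const_set :: "('e::ring_1 \<Rightarrow> 'e) set \<Rightarrow> 'e set" where
  "const_set D = (\<Inter>\<delta>\<in>D. {e. \<delta> e = 0})"

definition centralizer :: "'e::ring_1 set \<Rightarrow> 'e set" where
  "centralizer S = {e. \<forall>a\<in>S. e * a = a * e}"

inductive_set K_span :: "('k::field \<Rightarrow> 'e::ring_1) \<Rightarrow> 'e set \<Rightarrow> 'e set"
  for scal :: "'k \<Rightarrow> 'e" and X :: "'e set" where
  span_zero: "0 \<in> K_span scal X"
| span_gen: "x \<in> X \<Longrightarrow> x \<in> K_span scal X"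
| span_add: "x \<in> K_span scal X \<Longrightarrow> y \<in> K_span scal X \<Longrightarrow> x + y \<in> K_span scal X"
| span_smult: "x \<in> K_span scal X \<Longrightarrow> scal k * x \<in> K_span scal X"

definition ideal_prod :: "('k::field \<Rightarrow> 'e::ring_1) \<Rightarrow> 'e set \<Rightarrow> 'e set \<Rightarrow> 'e set" where
  "ideal_prod scal N I = K_span scal {n * x * m | n x m. n \<in> N \<and> x \<in> I \<and> m \<in> N}"

end

theory Submission
  imports Defs
begin

text \<open>The maps \<open>ad a\<close> are \<open>K\<close>-linear derivations, so by the Leibniz rule the levels
\<open>N\<^sub>i\<close> form a multiplicative filtration \<open>N\<^sub>i N\<^sub>j \<subseteq> N\<^sub>i\<^sub>+\<^sub>j\<close> of \<open>N\<^sub>\<Delta>(E)\<close>, whose bottom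
\<open>N\<^sub>0\<close> is the common kernel of \<open>\<Delta>\<close>, i.e. the centralizer of \<open>A'\<close>. As \<open>A\<close> is commutative,
\<open>A' \<subseteq> N\<^sub>0\<close>, so every ideal of \<open>N\<^sub>\<Delta>(E)\<close> is \<open>\<Delta>\<close>-stable; applying derivations to a nonzero
element of \<open>\<aa>\<close> lowers its level until a nonzero element of \<open>N\<^sub>0\<close> is reached. The ideal
\<open>\<aa>'\<close> lies between \<open>\<aa>\<^sub>0\<close> and \<open>\<aa>\<close>, hence meets \<open>N\<^sub>0\<close> exactly in \<open>\<aa>\<^sub>0\<close>. Finally, for
\<open>y \<in> \<aa>\<^sub>0\<close> one has \<open>\<delta>[x,y] = [\<delta>x,y]\<close>, which vanishes when \<open>\<delta>x \<in> N\<^sub>0\<close> commutes with \<open>y\<close>.\<close>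

lemma K_algebra_scal_central: "K_algebra scal \<Longrightarrow> scal k * e = e * scal k"
  by (simp add: K_algebra_def)

lemma K_algebra_scal_minus_one:
  assumes "K_algebra scal" shows "scal (-1) = -1"
proof -
  have "scal 0 = 0"
    using assms add_cancel_left_left unfolding K_algebra_def by (metis add_0)
  then have "scal (-1) + scal 1 = 0"
    using assms unfolding K_algebra_def by (metis add.left_inverse)
  then show ?thesis using assms by (simp add: K_algebra_def add_eq_0_iff2)
qed

lemma subspace_K_diff:
  assumes "K_algebra scal" "subspace_K scal V" "x \<in> V" "y \<in> V"
  shows "x - y \<in> V"
  using assms K_algebra_scal_minus_one[OF assms(1)] unfolding subspace_K_def
  by (metis mult_minus1 diff_conv_add_uminus)

lemma alg_ideal_ad_closed:
  "K_algebra scal \<Longrightarrow> alg_ideal scal S I \<Longrightarrow> a \<in> S \<Longrightarrow> z \<in> I \<Longrightarrow> ad a z \<in> I"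
  unfolding ad_def alg_ideal_def by (blast intro: subspace_K_diff)

lemma alg_ideal_Int_subalgebra:
  "alg_ideal scal S I \<Longrightarrow> subalgebra scal T \<Longrightarrow> T \<subseteq> S \<Longrightarrow> alg_ideal scal T (I \<inter> T)"
  unfolding alg_ideal_def subalgebra_def subspace_K_def by blast

lemma K_span_subset:
  assumes "subspace_K scal V" "X \<subseteq> V" shows "K_span scal X \<subseteq> V"
proof
  fix z assume "z \<in> K_span scal X"
  then show "z \<in> V" by induction (use assms in \<open>auto simp: subspace_K_def\<close>)
qed

lemma K_span_mult_left:
  assumes "K_algebra scal" "\<And>x. x \<in> X \<Longrightarrow> s * x \<in> X" "z \<in> K_span scal X"
  shows "s * z \<in> K_span scal X"
  using assms(3)
proof (induction z rule: K_span.induct)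
  case (span_smult x k)
  have "s * (scal k * x) = scal k * (s * x)"
    by (metis K_algebra_scal_central[OF assms(1)] mult.assoc)
  then show ?case by (simp add: span_smult.IH K_span.span_smult)
qed (auto simp: assms(2) distrib_left intro: K_span.intros)

lemma K_span_mult_right:
  assumes "\<And>x. x \<in> X \<Longrightarrow> x * s \<in> X" "z \<in> K_span scal X"
  shows "z * s \<in> K_span scal X"
  using assms(2)
  by (induction z rule: K_span.induct)
    (auto simp: assms(1) distrib_right mult.assoc intro: K_span.intros)

lemma alg_ideal_ideal_prod:
  assumes "K_algebra scal" "subalgebra scal N" "J \<subseteq> N"
  shows "alg_ideal scal N (ideal_prod scal N J)"
proof -
  let ?G = "{n * x * m | n x m. n \<in> N \<and> x \<in> J \<and> m \<in> N}"
  have N_mult: "x \<in> N \<Longrightarrow> y \<in> N \<Longrightarrow> x * y \<in> N" for x y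
    using assms(2) by (simp add: subalgebra_def)
  have "?G \<subseteq> N" using assms(3) N_mult by blast
  then have "ideal_prod scal N J \<subseteq> N"
    using assms(2) K_span_subset unfolding ideal_prod_def subalgebra_def by blast
  moreover have "s * z \<in> ideal_prod scal N J \<and> z * s \<in> ideal_prod scal N J"
    if "s \<in> N" "z \<in> ideal_prod scal N J" for s z
  proof -
    have "s * g \<in> ?G \<and> g * s \<in> ?G" if "g \<in> ?G" for g
    proof -
      obtain n x m where g: "g = n * x * m" "n \<in> N" "x \<in> J" "m \<in> N"
        using \<open>g \<in> ?G\<close> by blast
      then have "s * g = (s * n) * x * m" "g * s = n * x * (m * s)"
        by (simp_all add: mult.assoc)
      then show ?thesis using g N_mult \<open>s \<in> N\<close> by blast
    qed
    then show ?thesis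
      using K_span_mult_left[OF assms(1), of ?G s z] K_span_mult_right[of ?G s z scal]
        \<open>z \<in> ideal_prod scal N J\<close> unfolding ideal_prod_def by blast
  qed
  ultimately show ?thesis
    unfolding alg_ideal_def subspace_K_def ideal_prod_def by (auto intro: K_span.intros)
qed

lemma ideal_prod_subset: "alg_ideal scal N I \<Longrightarrow> J \<subseteq> I \<Longrightarrow> ideal_prod scal N J \<subseteq> I"
  unfolding ideal_prod_def alg_ideal_def by (rule K_span_subset) blast+

lemma subset_ideal_prod: "1 \<in> N \<Longrightarrow> J \<subseteq> ideal_prod scal N J"
  unfolding ideal_prod_def by (force intro: K_span.span_gen)

definition op_pow_kernel :: "('e::zero \<Rightarrow> 'e) set \<Rightarrow> nat \<Rightarrow> 'e set" where
  "op_pow_kernel D n = {e. \<forall>\<delta>\<in>op_pow D n. \<delta> e = 0}"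

lemma foldr_comp_snoc: "foldr (\<circ>) (ds @ [\<delta>]) id = foldr (\<circ>) ds id \<circ> \<delta>"
  by (induction ds) auto

lemma op_pow_0: "op_pow D 0 = {id}"
  by (auto simp: op_pow_def)

lemma op_pow_Suc: "op_pow D (Suc n) = {\<delta>s \<circ> \<delta> | \<delta>s \<delta>. \<delta>s \<in> op_pow D n \<and> \<delta> \<in> D}"
  unfolding op_pow_def
  by (fastforce simp: length_Suc_conv_rev foldr_comp_snoc simp del: foldr_append
      intro: exI[of _ "_ @ [_]"])

lemma op_pow_kernel_0: "op_pow_kernel D 0 = {0}"
  by (simp add: op_pow_kernel_def op_pow_0)

lemma op_pow_kernel_Suc: "op_pow_kernel D (Suc n) = {e. \<forall>\<delta>\<in>D. \<delta> e \<in> op_pow_kernel D n}"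
  unfolding op_pow_kernel_def op_pow_Suc by (auto 4 4)

lemma N_level_eq_op_pow_kernel: "N_level D i = op_pow_kernel D (Suc i)"
  by (simp add: N_level_def op_pow_kernel_def)

lemma N_level_0: "N_level D 0 = const_set D"
  by (auto simp: N_level_eq_op_pow_kernel op_pow_kernel_Suc op_pow_kernel_0 const_set_def)

lemma N_level_Suc: "N_level D (Suc i) = {e. \<forall>\<delta>\<in>D. \<delta> e \<in> N_level D i}"
  by (simp add: N_level_eq_op_pow_kernel op_pow_kernel_Suc[of D "Suc i"])

lemma N_level_subset_N_all: "N_level D i \<subseteq> N_all D"
  by (auto simp: N_all_def)

locale K_derivations =
  fixes scal :: "'k::field \<Rightarrow> 'e::ring_1" and D :: "('e \<Rightarrow> 'e) set"
  assumes derivation_add: "\<delta> \<in> D \<Longrightarrow> \<delta> (x + y) = \<delta> x + \<delta> y"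
    and derivation_scal: "\<delta> \<in> D \<Longrightarrow> \<delta> (scal k * x) = scal k * \<delta> x"
    and derivation_mult: "\<delta> \<in> D \<Longrightarrow> \<delta> (x * y) = \<delta> x * y + x * \<delta> y"
begin

lemma derivation_zero: "\<delta> \<in> D \<Longrightarrow> \<delta> 0 = 0"
  using derivation_add[of \<delta> 0 0] by simp

lemma derivation_one: "\<delta> \<in> D \<Longrightarrow> \<delta> 1 = 0"
  using derivation_mult[of \<delta> 1 1] by simp

lemma derivation_diff: "\<delta> \<in> D \<Longrightarrow> \<delta> (x - y) = \<delta> x - \<delta> y"
  using derivation_add[of \<delta> "x - y" y] by (simp add: eq_diff_eq)

lemma derivation_ad: "\<delta> \<in> D \<Longrightarrow> \<delta> (ad x y) = ad (\<delta> x) y + ad x (\<delta> y)"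
  by (simp add: ad_def derivation_diff derivation_mult algebra_simps)

lemma subspace_op_pow_kernel: "subspace_K scal (op_pow_kernel D n)"
  by (induction n) (auto simp: subspace_K_def op_pow_kernel_0 op_pow_kernel_Suc
      derivation_zero derivation_add derivation_scal)

lemma op_pow_kernel_Suc_mono: "op_pow_kernel D n \<subseteq> op_pow_kernel D (Suc n)"
  by (induction n) (auto simp: op_pow_kernel_0 op_pow_kernel_Suc derivation_zero
      subspace_op_pow_kernel[unfolded subspace_K_def])

lemma N_level_mono: "i \<le> j \<Longrightarrow> N_level D i \<subseteq> N_level D j"
  unfolding N_level_eq_op_pow_kernel
  by (induction j rule: dec_induct) (use op_pow_kernel_Suc_mono in blast)+

text \<open>Working with the kernels of \<open>\<Delta>\<^sup>n\<close> instead of the \<open>N\<^sub>i\<close> makes the base cases of the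
induction trivial, since the kernel of \<open>\<Delta>\<^sup>0 = {id}\<close> is \<open>{0}\<close>.\<close>
lemma op_pow_kernel_mult:
  "x \<in> op_pow_kernel D (Suc i) \<Longrightarrow> y \<in> op_pow_kernel D (Suc j) \<Longrightarrow>
    x * y \<in> op_pow_kernel D (Suc (i + j))"
proof (induction "i + j" arbitrary: i j x y rule: less_induct)
  case less
  have "\<delta> (x * y) \<in> op_pow_kernel D (i + j)" if "\<delta> \<in> D" for \<delta>
  proof -
    have dx: "\<delta> x \<in> op_pow_kernel D i" and dy: "\<delta> y \<in> op_pow_kernel D j"
      using less.prems \<open>\<delta> \<in> D\<close> by (auto simp: op_pow_kernel_Suc)
    have "\<delta> x * y \<in> op_pow_kernel D (i + j)"
    proof (cases i)
      case 0
      then show ?thesis using dx subspace_op_pow_kernel by (simp add: op_pow_kernel_0 subspace_K_def)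
    next
      case (Suc i')
      then show ?thesis using less.hyps[of i' j] dx less.prems(2) by simp
    qed
    moreover have "x * \<delta> y \<in> op_pow_kernel D (i + j)"
    proof (cases j)
      case 0
      then show ?thesis using dy subspace_op_pow_kernel by (simp add: op_pow_kernel_0 subspace_K_def)
    next
      case (Suc j')
      then show ?thesis using less.hyps[of i j'] dy less.prems(1) by simp
    qed
    ultimately show ?thesis
      using subspace_op_pow_kernel by (simp add: derivation_mult[OF \<open>\<delta> \<in> D\<close>] subspace_K_def)
  qed
  then show ?case by (simp add: op_pow_kernel_Suc)
qed

lemma N_level_mult: "x \<in> N_level D i \<Longrightarrow> y \<in> N_level D j \<Longrightarrow> x * y \<in> N_level D (i + j)"
  unfolding N_level_eq_op_pow_kernel by (rule op_pow_kernel_mult)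

lemma subspace_N_level: "subspace_K scal (N_level D i)"
  by (simp add: N_level_eq_op_pow_kernel subspace_op_pow_kernel)

lemma subalgebra_N_level_0: "subalgebra scal (N_level D 0)"
  using subspace_N_level[of 0] N_level_mult[of _ 0 _ 0]
  by (auto simp: subalgebra_def N_level_0 const_set_def derivation_one)

lemma subalgebra_N_all: "subalgebra scal (N_all D)"
  unfolding subalgebra_def subspace_K_def
proof (intro conjI ballI allI)
  show "0 \<in> N_all D" "1 \<in> N_all D"
    using subalgebra_N_level_0 N_level_subset_N_all by (auto simp: subalgebra_def subspace_K_def)
next
  fix x y assume "x \<in> N_all D" "y \<in> N_all D"
  then obtain i j where x: "x \<in> N_level D i" and y: "y \<in> N_level D j"
    by (auto simp: N_all_def)
  then have "x \<in> N_level D (i + j)" "y \<in> N_level D (i + j)"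
    using N_level_mono[of i "i + j"] N_level_mono[of j "i + j"] by auto
  then show "x + y \<in> N_all D"
    using subspace_N_level[of "i + j"] N_level_subset_N_all[of D "i + j"]
    by (auto simp: subspace_K_def)
  show "x * y \<in> N_all D"
    using N_level_mult[OF x y] N_level_subset_N_all by blast
next
  fix k x assume "x \<in> N_all D"
  then obtain i where "x \<in> N_level D i" by (auto simp: N_all_def)
  then show "scal k * x \<in> N_all D"
    using subspace_N_level[of i] N_level_subset_N_all[of D i] by (auto simp: subspace_K_def)
qed

lemma stable_nonzero_meets_N_level_0:
  assumes "I \<subseteq> N_all D" and stable: "\<And>\<delta> z. \<delta> \<in> D \<Longrightarrow> z \<in> I \<Longrightarrow> \<delta> z \<in> I"
    and "x \<in> I" "x \<noteq> 0"
  shows "\<exists>y \<in> I \<inter> N_level D 0. y \<noteq> 0"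
proof -
  obtain i where "x \<in> N_level D i" using assms by (auto simp: N_all_def)
  then show ?thesis using \<open>x \<in> I\<close> \<open>x \<noteq> 0\<close>
  proof (induction i arbitrary: x)
    case (Suc i)
    show ?case
    proof (cases "x \<in> N_level D 0")
      case False
      then obtain \<delta> where "\<delta> \<in> D" "\<delta> x \<noteq> 0" by (auto simp: N_level_0 const_set_def)
      then show ?thesis using Suc stable N_level_Suc by blast
    qed (use Suc.prems in blast)
  qed blast
qed

lemma ad_N_level_1_N_level_0:
  assumes "commutative_set (N_level D 0)" "x \<in> N_level D 1" "y \<in> N_level D 0"
  shows "ad x y \<in> N_level D 0"
proof -
  have "\<delta> (ad x y) = 0" if "\<delta> \<in> D" for \<delta>
  proof -
    have "\<delta> x \<in> N_level D 0" "\<delta> y = 0"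
      using assms(2,3) \<open>\<delta> \<in> D\<close> N_level_Suc[of D 0] by (auto simp: N_level_0 const_set_def)
    then show ?thesis
      using assms(1,3) derivation_ad[OF \<open>\<delta> \<in> D\<close>, of x y]
      by (simp add: commutative_set_def ad_def)
  qed
  then show ?thesis by (simp add: N_level_0 const_set_def)
qed

end

lemma K_derivations_ad:
  assumes "K_algebra scal" shows "K_derivations scal (ad ` S)"
proof
  fix \<delta> x y k assume "\<delta> \<in> ad ` S"
  then obtain a where a: "\<delta> = ad a" by blast
  show "\<delta> (x + y) = \<delta> x + \<delta> y" "\<delta> (x * y) = \<delta> x * y + x * \<delta> y"
    by (simp_all add: a ad_def algebra_simps)
  have "a * (scal k * x) = scal k * (a * x)"
    by (metis K_algebra_scal_central[OF assms] mult.assoc)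
  then show "\<delta> (scal k * x) = scal k * \<delta> x"
    by (simp add: a ad_def algebra_simps)
qed

lemma const_set_ad: "const_set (ad ` S) = centralizer S"
  by (auto simp: const_set_def centralizer_def ad_def)

theorem theorem1p7:
  fixes scal :: "'k::field \<Rightarrow> 'e::ring_1"
    and A A' \<aa> :: "'e set"
  assumes alg: "K_algebra scal"
    and subA: "subalgebra scal A" and commA: "commutative_set A"
    and A'_sub: "A' \<subseteq> A" and A'_ne: "A' \<noteq> {}"
    and ideal_a: "alg_ideal scal (N_all (ad ` A')) \<aa>"
    and a_nz: "\<aa> \<noteq> {0}"
  shows "N_level (ad ` A') 0 = const_set (ad ` A')
      \<and> const_set (ad ` A') = centralizer A'
      \<and> \<aa> \<inter> N_level (ad ` A') 0 = \<aa> \<inter> const_set (ad ` A')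
      \<and> alg_ideal scal (N_level (ad ` A') 0) (\<aa> \<inter> N_level (ad ` A') 0)
      \<and> \<aa> \<inter> N_level (ad ` A') 0 \<noteq> {0}
      \<and> alg_ideal scal (N_all (ad ` A'))
          (ideal_prod scal (N_all (ad ` A')) (\<aa> \<inter> N_level (ad ` A') 0))
      \<and> ideal_prod scal (N_all (ad ` A')) (\<aa> \<inter> N_level (ad ` A') 0) \<noteq> {0}
      \<and> ideal_prod scal (N_all (ad ` A')) (\<aa> \<inter> N_level (ad ` A') 0) \<inter> N_level (ad ` A') 0
          = \<aa> \<inter> N_level (ad ` A') 0
      \<and> (commutative_set (N_level (ad ` A') 0) \<longrightarrow>
          {ad x y | x y. x \<in> N_level (ad ` A') 1 \<and> y \<in> \<aa> \<inter> N_level (ad ` A') 0}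
            \<subseteq> \<aa> \<inter> N_level (ad ` A') 0)"
proof -
  let ?D = "ad ` A'"
  let ?a0 = "\<aa> \<inter> N_level ?D 0"
  let ?P = "ideal_prod scal (N_all ?D) ?a0"
  interpret K_derivations scal ?D using alg by (rule K_derivations_ad)
  have N0_centralizer: "N_level ?D 0 = centralizer A'" by (simp add: N_level_0 const_set_ad)
  have "A' \<subseteq> N_level ?D 0"
    using commA A'_sub by (auto simp: N0_centralizer centralizer_def commutative_set_def)
  then have stable: "\<delta> z \<in> \<aa>" if "\<delta> \<in> ?D" "z \<in> \<aa>" for \<delta> z
    using that alg_ideal_ad_closed[OF alg ideal_a] N_level_subset_N_all by blast
  have a_sub: "\<aa> \<subseteq> N_all ?D" and "0 \<in> \<aa>" using ideal_a by (auto simp: alg_ideal_def subspace_K_def)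
  then obtain x where "x \<in> \<aa>" "x \<noteq> 0" using a_nz by blast
  then obtain y where "y \<in> ?a0" "y \<noteq> 0"
    using stable_nonzero_meets_N_level_0[of \<aa> x] a_sub stable by blast
  moreover have "?a0 \<subseteq> ?P"
    using subalgebra_N_all by (intro subset_ideal_prod) (simp add: subalgebra_def)
  moreover have "?P \<subseteq> \<aa>" by (simp add: ideal_prod_subset[OF ideal_a])
  moreover have "alg_ideal scal (N_all ?D) ?P"
    using a_sub by (intro alg_ideal_ideal_prod[OF alg subalgebra_N_all]) blast
  moreover have "alg_ideal scal (N_level ?D 0) ?a0"
    by (rule alg_ideal_Int_subalgebra[OF ideal_a subalgebra_N_level_0 N_level_subset_N_all])
  moreover have "ad u v \<in> ?a0"
    if "commutative_set (N_level ?D 0)" "u \<in> N_level ?D 1" "v \<in> ?a0" for u v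
    using that ad_N_level_1_N_level_0 alg_ideal_ad_closed[OF alg ideal_a] N_level_subset_N_all
    by blast
  ultimately show ?thesis
    by (auto simp: N_level_0 const_set_ad)
qed

end
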